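(* Let $\mathbb{F}$ be a field with $\mathrm{char}(\mathbb{F})\neq 2,3$. Let $I$ be a non-zero ideal of $\hat{\mathcal{H}}$ contained in $J$, and let $x$ be a non-zero element of $I$ of minimal $J$-degree, with $p$-level $3k$. Then $I$ has codimension $2(k-1)$ in $J$.
   Context: Notation: $\mathbb{N}=\{1,2,3,\dots\}$, $3\mathbb{N}=\{3,6,9,\dots\}$; for $r\in\mathbb{Z}$, $\bar r=r+3\mathbb{Z}\in\mathbb{Z}_3$. The algebra $\hat{\mathcal{H}}$ is the commutative $\mathbb{F}$-algebra with basis $\{a_i:i\in\mathbb{Z}\}\cup\{s_j:j\in\mathbb{N}\}\cup\{p_{\bar r,k}:\bar r\in\{\bar1,\bar2\},\ k\in 3\mathbb{N}\}$, where $s_0=0$, $p_{\bar r,j}=0$ for all $\bar r$ whenever $j\notin 3\mathbb{N}$, $p_{\bar 0,j}=-p_{\bar1,j}-p_{\bar2,j}$, $z_{\bar r,j}=p_{\bar r+\bar1,j}-p_{\bar r-\bar1,j}$, and for $i,i'\in\mathbb{Z}$, $j,l\in\mathbb{N}$, $h,k\in3\mathbb{N}$, $\bar r,\bar t\in\mathbb{Z}_3$: (H1) $a_ia_{i'}=\tfrac12(a_i+a_{i'})+s_{|i-i'|}+z_{\bar\imath,|i-i'|}$; (H2) $a_is_j=-\tfrac34a_i+\tfrac38(a_{i-j}+a_{i+j})+\tfrac32 s_j-z_{\bar\imath,j}$; (H3) $a_ip_{\bar r,k}=\tfrac32p_{\bar r,k}-p_{-(\bar\imath+\bar r),k}$;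 (H4) $s_js_l=\tfrac34(s_j+s_l)-\tfrac38(s_{|j-l|}+s_{j+l})$; (H5) $s_jp_{\bar r,k}=\tfrac34(p_{\bar r,j}+p_{\bar r,k})-\tfrac38(p_{\bar r,|j-k|}+p_{\bar r,j+k})$; (H6) $p_{\bar r,h}p_{\bar t,k}=\tfrac14(z_{-(\bar r+\bar t),h}+z_{-(\bar r+\bar t),k})-\tfrac18(z_{-(\bar r+\bar t),|h-k|}+z_{-(\bar r+\bar t),h+k})$. $J=\langle p_{\bar1,j},p_{\bar2,j}:j\in3\mathbb{N}\rangle$ (an ideal). Every non-zero $x\in J$ is uniquely $x=\sum_{j\in3\mathbb{N},\,j\le 3m}\sum_{\bar r\in\{\bar1,\bar2\}}\beta_{\bar r,j}p_{\bar r,j}$ with $\beta_{\bar r,3m}\neq0$ for some $\bar r$; its $p$-level is $3m$ and its $J$-degree is $3m+\sum_{r\in\{1,2\},\ \beta_{\bar r,3m}\neq0}\tfrac r4$. *)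

theory Defs
  imports Complex_Main "HOL-Library.Poly_Mapping"
begin

text \<open>Basis indices of the algebra H-hat:
  A i   stands for a_i (i an integer),
  S j   stands for s_j (only j >= 1 is a basis element),
  P r k stands for p_{r,k} (only r in {1,2}, k in 3N is a basis element).\<close>
datatype hidx = A int | S nat | P nat nat

definition valid_idx :: "hidx \<Rightarrow> bool" where
  "valid_idx b = (case b of A i \<Rightarrow> True | S j \<Rightarrow> j \<ge> 1
                   | P r k \<Rightarrow> (r = 1 \<or> r = 2) \<and> 3 dvd k \<and> k > 0)"

type_synonym 'a helt = "hidx \<Rightarrow>\<^sub>0 'a"

definition Hhat :: "'a::field helt set" where
  "Hhat = {f. \<forall>b\<in>Poly_Mapping.keys f. valid_idx b}"

definition hsc :: "'a::field \<Rightarrow> 'a helt \<Rightarrow> 'a helt" where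
  "hsc c f = Poly_Mapping.map (\<lambda>x. c * x) f"

text \<open>The named elements a_i, s_j (with s_0 = 0), p_{r,j} (r taken mod 3,
  p_{r,j} = 0 for j not in 3N, p_0 = - p_1 - p_2) and z_{r,j}.\<close>
definition ha :: "int \<Rightarrow> 'a::field helt" where
  "ha i = Poly_Mapping.single (A i) 1"

definition hs :: "nat \<Rightarrow> 'a::field helt" where
  "hs j = (if j = 0 then 0 else Poly_Mapping.single (S j) 1)"

definition hp :: "int \<Rightarrow> nat \<Rightarrow> 'a::field helt" where
  "hp r j = (if j = 0 \<or> \<not> (3 dvd j) then 0
             else if r mod 3 = 1 then Poly_Mapping.single (P 1 j) 1
             else if r mod 3 = 2 then Poly_Mapping.single (P 2 j) 1
             else - Poly_Mapping.single (P 1 j) 1 - Poly_Mapping.single (P 2 j) 1)"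

definition hz :: "int \<Rightarrow> nat \<Rightarrow> 'a::field helt" where
  "hz r j = hp (r + 1) j - hp (r - 1) j"

text \<open>Products of basis elements, rules (H1)-(H6) (and their commuted versions).\<close>
fun bprod :: "hidx \<Rightarrow> hidx \<Rightarrow> 'a::field helt" where
  "bprod (A i) (A i') = hsc (1/2) (ha i + ha i') + hs (nat \<bar>i - i'\<bar>) + hz i (nat \<bar>i - i'\<bar>)"
| "bprod (A i) (S j) = hsc (-3/4) (ha i) + hsc (3/8) (ha (i - int j) + ha (i + int j))
      + hsc (3/2) (hs j) - hz i j"
| "bprod (S j) (A i) = hsc (-3/4) (ha i) + hsc (3/8) (ha (i - int j) + ha (i + int j))
      + hsc (3/2) (hs j) - hz i j"
| "bprod (A i) (P r k) = hsc (3/2) (hp (int r) k) - hp (- (i + int r)) k"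
| "bprod (P r k) (A i) = hsc (3/2) (hp (int r) k) - hp (- (i + int r)) k"
| "bprod (S j) (S l) = hsc (3/4) (hs j + hs l) - hsc (3/8) (hs (nat \<bar>int j - int l\<bar>) + hs (j + l))"
| "bprod (S j) (P r k) = hsc (3/4) (hp (int r) j + hp (int r) k)
      - hsc (3/8) (hp (int r) (nat \<bar>int j - int k\<bar>) + hp (int r) (j + k))"
| "bprod (P r k) (S j) = hsc (3/4) (hp (int r) j + hp (int r) k)
      - hsc (3/8) (hp (int r) (nat \<bar>int j - int k\<bar>) + hp (int r) (j + k))"
| "bprod (P r h) (P t k) =
      hsc (1/4) (hz (- (int r + int t)) h + hz (- (int r + int t)) k)
      - hsc (1/8) (hz (- (int r + int t)) (nat \<bar>int h - int k\<bar>) + hz (- (int r + int t)) (h + k))"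

definition hmul :: "'a::field helt \<Rightarrow> 'a helt \<Rightarrow> 'a helt" where
  "hmul f g = (\<Sum>b\<in>Poly_Mapping.keys f. \<Sum>c\<in>Poly_Mapping.keys g. hsc (Poly_Mapping.lookup f b * Poly_Mapping.lookup g c) (bprod b c))"

definition is_ideal :: "'a::field helt set \<Rightarrow> bool" where
  "is_ideal I \<longleftrightarrow> I \<subseteq> Hhat \<and> 0 \<in> I \<and> (\<forall>x\<in>I. \<forall>y\<in>I. x + y \<in> I)
     \<and> (\<forall>c. \<forall>x\<in>I. hsc c x \<in> I) \<and> (\<forall>h\<in>Hhat. \<forall>x\<in>I. hmul h x \<in> I)"

definition Jid :: "'a::field helt set" where
  "Jid = \<Inter> {I. is_ideal I \<and> (\<forall>r\<in>{1,2}. \<forall>j. 3 dvd j \<and> j > 0 \<longrightarrow> hp (int r) j \<in> I)}"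

definition plevel :: "'a::field helt \<Rightarrow> nat" where
  "plevel x = Max {k. Poly_Mapping.lookup x (P 1 k) \<noteq> 0 \<or> Poly_Mapping.lookup x (P 2 k) \<noteq> 0}"

definition jdeg :: "'a::field helt \<Rightarrow> real" where
  "jdeg x = real (plevel x)
     + (if Poly_Mapping.lookup x (P 1 (plevel x)) \<noteq> 0 then 1/4 else 0)
     + (if Poly_Mapping.lookup x (P 2 (plevel x)) \<noteq> 0 then 2/4 else 0)"

text \<open>I has codimension n in J (I a subspace of J): dim (J / I) = n, i.e. there are
  n vectors of J that are linearly independent modulo I and span J modulo I.\<close>
definition has_codim :: "nat \<Rightarrow> 'a::field helt set \<Rightarrow> 'a helt set \<Rightarrow> bool" where
  "has_codim n I W \<longleftrightarrow> (\<exists>v :: nat \<Rightarrow> 'a helt.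
      (\<forall>i<n. v i \<in> W)
    \<and> W = {y + (\<Sum>i<n. hsc (c i) (v i)) | y c. y \<in> I}
    \<and> (\<forall>c. (\<Sum>i<n. hsc (c i) (v i)) \<in> I \<longrightarrow> (\<forall>i<n. c i = 0)))"

end

theory Submission
  imports Defs
begin

text \<open>
  J is the span of the basis vectors p_{r,j} (r = 1, 2, j in 3N), graded by the level j.
  Let x have level 3k and leading part \<alpha> p_{1,3k} + \<beta> p_{2,3k}. By (H3), the operator
  3/2 - a_i sends p_{r,j} to p_{-(i+r),j}; adding to x its image for i = 1, 2 produces
  elements of I whose leading parts are (2\<alpha> - \<beta>) p_{1,3k} and (2\<beta> - \<alpha>) p_{2,3k}, not both
  zero when char F \<noteq> 3, and i = 0 swaps p_{1,j} and p_{2,j}. By (H5), multiplication by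
  s_3 turns a leading term p_{r,j} into -3/8 p_{r,j+3}. So for every j \<ge> 3k and every r,
  I contains an element p_{r,j} + (terms of lower level), and by induction on the level
  J = I + span {p_{r,j} : j < 3k}. The sum is direct: a non-zero element of I of level
  below 3k would have smaller J-degree than x.
\<close>

lemma lookup_hsc [simp]: "Poly_Mapping.lookup (hsc c f) b = c * Poly_Mapping.lookup f b"
  by (simp add: hsc_def Poly_Mapping.map.rep_eq when_def)

lemma hsc_add_left: "hsc (a + b) f = hsc a f + hsc b f"
  by (rule poly_mapping_eqI) (simp add: lookup_add algebra_simps)

lemma hsc_add_right: "hsc a (f + g) = hsc a f + hsc a g"
  by (rule poly_mapping_eqI) (simp add: lookup_add algebra_simps)

lemma hsc_diff_right: "hsc a (f - g) = hsc a f - hsc a g"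
  by (rule poly_mapping_eqI) (simp add: lookup_minus algebra_simps)

lemma hsc_hsc: "hsc a (hsc b f) = hsc (a * b) f"
  by (rule poly_mapping_eqI) simp

lemma hsc_0_left [simp]: "hsc 0 f = 0"
  by (rule poly_mapping_eqI) simp

lemma hsc_1 [simp]: "hsc 1 f = f"
  by (rule poly_mapping_eqI) simp

lemma hsc_uminus_left: "hsc (- a) f = - hsc a f"
  by (rule poly_mapping_eqI) simp

lemma hsc_minus_1: "hsc (-1) f = - f"
  by (rule poly_mapping_eqI) simp

lemma hsc_sum_right: "hsc a (sum g X) = (\<Sum>i\<in>X. hsc a (g i))"
  by (rule poly_mapping_eqI) (simp add: lookup_sum sum_distrib_left)

lemma keys_hsc_subset: "Poly_Mapping.keys (hsc a f) \<subseteq> Poly_Mapping.keys f"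
  by (auto simp: in_keys_iff)

lemma sum_keys_hsc_single:
  "(\<Sum>b\<in>Poly_Mapping.keys f. hsc (Poly_Mapping.lookup f b) (Poly_Mapping.single b 1)) = f"
proof (rule poly_mapping_eqI)
  fix c
  have "Poly_Mapping.lookup (\<Sum>b\<in>Poly_Mapping.keys f. hsc (Poly_Mapping.lookup f b) (Poly_Mapping.single b 1)) c
      = (\<Sum>b\<in>Poly_Mapping.keys f. if b = c then Poly_Mapping.lookup f b else 0)"
    by (simp add: lookup_sum lookup_single when_def if_distrib cong: if_cong)
  also have "\<dots> = Poly_Mapping.lookup f c"
    by (simp add: in_keys_iff)
  finally show "Poly_Mapping.lookup (\<Sum>b\<in>Poly_Mapping.keys f. hsc (Poly_Mapping.lookup f b) (Poly_Mapping.single b 1)) c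
      = Poly_Mapping.lookup f c" .
qed

definition coord_space :: "hidx set \<Rightarrow> 'a::field helt set" where
  "coord_space B = {f. Poly_Mapping.keys f \<subseteq> B}"

lemma coord_space_0 [simp]: "0 \<in> coord_space B"
  by (simp add: coord_space_def)

lemma coord_space_add: "f \<in> coord_space B \<Longrightarrow> g \<in> coord_space B \<Longrightarrow> f + g \<in> coord_space B"
  unfolding coord_space_def using keys_add[of f g] by blast

lemma coord_space_uminus: "f \<in> coord_space B \<Longrightarrow> - f \<in> coord_space B"
  by (simp add: coord_space_def)

lemma coord_space_diff: "f \<in> coord_space B \<Longrightarrow> g \<in> coord_space B \<Longrightarrow> f - g \<in> coord_space B"
  using coord_space_add[OF _ coord_space_uminus, of f B g] by simp

lemma coord_space_hsc: "f \<in> coord_space B \<Longrightarrow> hsc a f \<in> coord_space B"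
  unfolding coord_space_def using keys_hsc_subset[of a f] by blast

lemma coord_space_sum: "(\<And>i. i \<in> X \<Longrightarrow> g i \<in> coord_space B) \<Longrightarrow> sum g X \<in> coord_space B"
  by (induction X rule: infinite_finite_induct) (auto intro: coord_space_add)

lemma single_in_coord_space: "b \<in> B \<Longrightarrow> Poly_Mapping.single b c \<in> coord_space B"
  by (simp add: coord_space_def)

lemma key_in_coord_space: "f \<in> coord_space B \<Longrightarrow> b \<in> Poly_Mapping.keys f \<Longrightarrow> b \<in> B"
  by (auto simp: coord_space_def)

lemma hmul_keys_superset:
  assumes "finite X" "Poly_Mapping.keys g \<subseteq> X"
  shows "hmul f g = (\<Sum>b\<in>Poly_Mapping.keys f. \<Sum>c\<in>X.
                        hsc (Poly_Mapping.lookup f b * Poly_Mapping.lookup g c) (bprod b c))"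
  unfolding hmul_def
  by (intro sum.cong refl sum.mono_neutral_left) (use assms in \<open>auto simp: in_keys_iff\<close>)

lemma hmul_add_right: "hmul f (g + h) = hmul f g + hmul f h"
proof -
  let ?X = "Poly_Mapping.keys g \<union> Poly_Mapping.keys h"
  have "Poly_Mapping.keys (g + h) \<subseteq> ?X"
    by (rule keys_add)
  then show ?thesis
    by (simp add: hmul_keys_superset[of ?X] lookup_add distrib_left distrib_right
                  hsc_add_left sum.distrib)
qed

lemma hmul_hsc_right: "hmul f (hsc a g) = hsc a (hmul f g)"
  by (simp add: hmul_keys_superset[of "Poly_Mapping.keys g"] keys_hsc_subset hsc_sum_right
                hsc_hsc mult.left_commute)

lemma hmul_diff_right: "hmul f (g - h) = hmul f g - hmul f h"
  by (metis diff_conv_add_uminus hsc_minus_1 hmul_add_right hmul_hsc_right)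

lemma hmul_single_single:
  "hmul (Poly_Mapping.single b a) (Poly_Mapping.single c a') = hsc (a * a') (bprod b c)"
  by (cases "a = 0"; cases "a' = 0") (simp_all add: hmul_def)

lemma hmul_in_coord_space:
  fixes f g :: "'a::field helt"
  assumes "g \<in> coord_space C"
    and "\<And>b c. b \<in> Poly_Mapping.keys f \<Longrightarrow> c \<in> C \<Longrightarrow> (bprod b c :: 'a helt) \<in> coord_space B"
  shows "hmul f g \<in> coord_space B"
  unfolding hmul_def
proof (intro coord_space_sum coord_space_hsc)
  fix b c assume b: "b \<in> Poly_Mapping.keys f" and c: "c \<in> Poly_Mapping.keys g"
  show "(bprod b c :: 'a helt) \<in> coord_space B"
    by (rule assms(2)[OF b key_in_coord_space[OF assms(1) c]])
qed

section \<open>Codimension via triangular spanning sets\<close>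

definition hsubspace :: "'a::field helt set \<Rightarrow> bool" where
  "hsubspace I \<longleftrightarrow> 0 \<in> I \<and> (\<forall>y\<in>I. \<forall>z\<in>I. y + z \<in> I) \<and> (\<forall>c. \<forall>y\<in>I. hsc c y \<in> I)"

lemma ideal_imp_hsubspace: "is_ideal I \<Longrightarrow> hsubspace I"
  by (simp add: is_ideal_def hsubspace_def)

definition plus_span :: "'a::field helt set \<Rightarrow> (nat \<Rightarrow> 'a helt) \<Rightarrow> nat \<Rightarrow> 'a helt set" where
  "plus_span I v n = {y + (\<Sum>i<n. hsc (c i) (v i)) | y c. y \<in> I}"

lemma has_codim_iff_plus_span:
  "has_codim n I W \<longleftrightarrow> (\<exists>v. (\<forall>i<n. v i \<in> W) \<and> W = plus_span I v n
                           \<and> (\<forall>c. (\<Sum>i<n. hsc (c i) (v i)) \<in> I \<longrightarrow> (\<forall>i<n. c i = 0)))"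
  by (simp add: has_codim_def plus_span_def)

lemma plus_spanI: "y \<in> I \<Longrightarrow> y + (\<Sum>i<n. hsc (c i) (v i)) \<in> plus_span I v n"
  by (auto simp: plus_span_def)

context
  fixes I :: "'a::field helt set"
  assumes I: "hsubspace I"
begin

lemma plus_span_add:
  assumes "f \<in> plus_span I v n" "g \<in> plus_span I v n"
  shows "f + g \<in> plus_span I v n"
proof -
  obtain y c where f: "f = y + (\<Sum>i<n. hsc (c i) (v i))" "y \<in> I"
    using assms(1) by (auto simp: plus_span_def)
  obtain y' c' where g: "g = y' + (\<Sum>i<n. hsc (c' i) (v i))" "y' \<in> I"
    using assms(2) by (auto simp: plus_span_def)
  have "f + g = (y + y') + (\<Sum>i<n. hsc (c i + c' i) (v i))"
    by (simp add: f g hsc_add_left sum.distrib algebra_simps)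
  moreover have "y + y' \<in> I"
    using I f g by (simp add: hsubspace_def)
  ultimately show ?thesis
    using plus_spanI[where y="y + y'" and c="\<lambda>i. c i + c' i"] by simp
qed

lemma plus_span_hsc:
  assumes "f \<in> plus_span I v n"
  shows "hsc a f \<in> plus_span I v n"
proof -
  obtain y c where f: "f = y + (\<Sum>i<n. hsc (c i) (v i))" "y \<in> I"
    using assms by (auto simp: plus_span_def)
  have "hsc a f = hsc a y + (\<Sum>i<n. hsc (a * c i) (v i))"
    by (simp add: f hsc_add_right hsc_sum_right hsc_hsc)
  moreover have "hsc a y \<in> I"
    using I f by (simp add: hsubspace_def)
  ultimately show ?thesis
    using plus_spanI[where y="hsc a y" and c="\<lambda>i. a * c i"] by simp
qed

lemma plus_span_diff:
  "f \<in> plus_span I v n \<Longrightarrow> g \<in> plus_span I v n \<Longrightarrow> f - g \<in> plus_span I v n"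
  by (metis diff_conv_add_uminus hsc_minus_1 plus_span_add plus_span_hsc)

lemma subset_plus_span: "I \<subseteq> plus_span I v n"
proof
  fix y assume "y \<in> I"
  moreover have "y = y + (\<Sum>i<n. hsc 0 (v i))"
    by simp
  ultimately show "y \<in> plus_span I v n"
    using plus_spanI[where c="\<lambda>_. 0"] by simp
qed

lemma zero_in_plus_span: "0 \<in> plus_span I v n"
  using I subset_plus_span by (auto simp: hsubspace_def)

lemma plus_span_sum:
  "(\<And>j. j \<in> X \<Longrightarrow> g j \<in> plus_span I v n) \<Longrightarrow> sum g X \<in> plus_span I v n"
  by (induction X rule: infinite_finite_induct) (auto intro: zero_in_plus_span plus_span_add)

lemma generator_in_plus_span:
  assumes "j < n"
  shows "v j \<in> plus_span I v n"
proof -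
  have "(\<Sum>i<n. hsc (if i = j then 1 else 0) (v i)) = (\<Sum>i<n. if i = j then v i else 0)"
    by (rule sum.cong) simp_all
  also have "\<dots> = v j"
    using assms by simp
  finally have "v j = 0 + (\<Sum>i<n. hsc (if i = j then 1 else 0) (v i))"
    by simp
  moreover have "0 \<in> I"
    using I by (simp add: hsubspace_def)
  ultimately show ?thesis
    using plus_spanI[where y=0 and c="\<lambda>i. if i = j then 1 else 0"] by simp
qed

lemma coord_space_subset_plus_span:
  fixes e :: "nat \<Rightarrow> hidx" and lev :: "hidx \<Rightarrow> nat"
  assumes C: "C \<subseteq> e ` {..<n}"
    and triangular: "\<And>b. b \<in> B - C \<Longrightarrow>
           \<exists>z\<in>I. z - Poly_Mapping.single b 1 \<in> coord_space {c \<in> B. lev c < lev b}"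
  shows "coord_space B \<subseteq> plus_span I (\<lambda>i. Poly_Mapping.single (e i) 1) n"
proof -
  let ?M = "plus_span I (\<lambda>i. Poly_Mapping.single (e i) 1) n"
  have single: "Poly_Mapping.single b 1 \<in> ?M" if "b \<in> B" for b
    using that
  proof (induction b rule: measure_induct_rule[of lev])
    case (less b)
    show ?case
    proof (cases "b \<in> C")
      case True
      then obtain i where "i < n" "b = e i"
        using C by blast
      then show ?thesis
        using generator_in_plus_span[of i n] by simp
    next
      case False
      with triangular less.prems obtain z where z: "z \<in> I"
        and low: "z - Poly_Mapping.single b 1 \<in> coord_space {c \<in> B. lev c < lev b}"
        by blast
      have "Poly_Mapping.single c 1 \<in> ?M"
        if "c \<in> Poly_Mapping.keys (z - Poly_Mapping.single b 1)" for c
        using key_in_coord_space[OF low that] less.IH by blast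
      then have "z - Poly_Mapping.single b 1 \<in> ?M"
        by (subst sum_keys_hsc_single[symmetric]) (intro plus_span_sum plus_span_hsc)
      moreover have "z \<in> ?M"
        using z subset_plus_span by blast
      ultimately show ?thesis
        using plus_span_diff by fastforce
    qed
  qed
  show ?thesis
  proof
    fix f :: "'a helt" assume "f \<in> coord_space B"
    then have "(\<Sum>b\<in>Poly_Mapping.keys f. hsc (Poly_Mapping.lookup f b) (Poly_Mapping.single b 1)) \<in> ?M"
      by (intro plus_span_sum plus_span_hsc single) (rule key_in_coord_space)
    then show "f \<in> ?M"
      by (simp only: sum_keys_hsc_single)
  qed
qed

lemma coeffs_zero_if_disjoint:
  fixes e :: "nat \<Rightarrow> hidx"
  assumes e: "inj_on e {..<n}" "e ` {..<n} \<subseteq> C" and disjoint: "I \<inter> coord_space C \<subseteq> {0}"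
    and comb: "(\<Sum>i<n. hsc (c i) (Poly_Mapping.single (e i) 1)) \<in> I" and j: "j < n"
  shows "c j = 0"
proof -
  have "(\<Sum>i<n. hsc (c i) (Poly_Mapping.single (e i) 1)) \<in> coord_space C"
    using e(2) by (auto intro!: coord_space_sum coord_space_hsc single_in_coord_space)
  with comb disjoint have zero: "(\<Sum>i<n. hsc (c i) (Poly_Mapping.single (e i) 1)) = 0"
    by blast
  have "Poly_Mapping.lookup (\<Sum>i<n. hsc (c i) (Poly_Mapping.single (e i) 1)) (e j)
      = (\<Sum>i<n. if i = j then c i else 0)"
    unfolding lookup_sum
  proof (rule sum.cong)
    fix i assume "i \<in> {..<n}"
    then have "e i = e j \<longleftrightarrow> i = j"
      using e(1) j by (auto simp: inj_on_def)
    then show "Poly_Mapping.lookup (hsc (c i) (Poly_Mapping.single (e i) 1)) (e j)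
        = (if i = j then c i else 0)"
      by (simp add: lookup_single)
  qed simp
  with zero j show ?thesis
    by simp
qed

lemma has_codim_triangular:
  fixes e :: "nat \<Rightarrow> hidx" and lev :: "hidx \<Rightarrow> nat"
  assumes I_sub: "I \<subseteq> coord_space B" and e: "bij_betw e {..<n} C" and C_sub: "C \<subseteq> B"
    and disjoint: "I \<inter> coord_space C \<subseteq> {0}"
    and triangular: "\<And>b. b \<in> B - C \<Longrightarrow>
           \<exists>z\<in>I. z - Poly_Mapping.single b 1 \<in> coord_space {c \<in> B. lev c < lev b}"
  shows "has_codim n I (coord_space B)"
  unfolding has_codim_iff_plus_span
proof (intro exI conjI allI impI)
  have e_in_B: "e i \<in> B" if "i < n" for i
    using e C_sub that by (auto simp: bij_betw_def)
  then show "Poly_Mapping.single (e i) 1 \<in> coord_space B" if "i < n" for i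
    using that by (simp add: single_in_coord_space)
  have "plus_span I (\<lambda>i. Poly_Mapping.single (e i) 1) n \<subseteq> coord_space B"
    unfolding plus_span_def using I_sub e_in_B
    by (auto intro!: coord_space_add coord_space_sum coord_space_hsc single_in_coord_space)
  moreover have "coord_space B \<subseteq> plus_span I (\<lambda>i. Poly_Mapping.single (e i) 1) n"
    using e triangular by (intro coord_space_subset_plus_span[where lev = lev]) (auto simp: bij_betw_def)
  ultimately show "coord_space B = plus_span I (\<lambda>i. Poly_Mapping.single (e i) 1) n"
    by blast
  show "c j = 0" if "(\<Sum>i<n. hsc (c i) (Poly_Mapping.single (e i) 1)) \<in> I" "j < n" for c j
    using e disjoint that by (intro coeffs_zero_if_disjoint[where C = C]) (auto simp: bij_betw_def)
qed
end


section \<open>The ideal J\<close>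

lemma ideal_0: "is_ideal I \<Longrightarrow> 0 \<in> I"
  by (simp add: is_ideal_def)

lemma ideal_add: "is_ideal I \<Longrightarrow> y \<in> I \<Longrightarrow> z \<in> I \<Longrightarrow> y + z \<in> I"
  by (simp add: is_ideal_def)

lemma ideal_hsc: "is_ideal I \<Longrightarrow> y \<in> I \<Longrightarrow> hsc c y \<in> I"
  by (simp add: is_ideal_def)

lemma ideal_diff: "is_ideal I \<Longrightarrow> y \<in> I \<Longrightarrow> z \<in> I \<Longrightarrow> y - z \<in> I"
  by (metis diff_conv_add_uminus hsc_minus_1 ideal_add ideal_hsc)

lemma ideal_sum: "is_ideal I \<Longrightarrow> (\<And>i. i \<in> X \<Longrightarrow> g i \<in> I) \<Longrightarrow> sum g X \<in> I"
  by (induction X rule: infinite_finite_induct) (auto intro: ideal_0 ideal_add)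

lemma ideal_hmul: "is_ideal I \<Longrightarrow> h \<in> Hhat \<Longrightarrow> y \<in> I \<Longrightarrow> hmul h y \<in> I"
  by (simp add: is_ideal_def)

lemma hp_in_coord_space:
  "(0 < l \<Longrightarrow> 3 dvd l \<Longrightarrow> P 1 l \<in> B \<and> P 2 l \<in> B) \<Longrightarrow> hp r l \<in> coord_space B"
  unfolding hp_def by (auto intro!: single_in_coord_space coord_space_diff coord_space_uminus)

lemma hz_in_coord_space:
  "(0 < l \<Longrightarrow> 3 dvd l \<Longrightarrow> P 1 l \<in> B \<and> P 2 l \<in> B) \<Longrightarrow> hz r l \<in> coord_space B"
  unfolding hz_def by (intro coord_space_diff hp_in_coord_space)

definition P_idx :: "hidx set" where
  "P_idx = {P r l | r l. (r = 1 \<or> r = 2) \<and> 3 dvd l \<and> 0 < l}"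

fun idx_level :: "hidx \<Rightarrow> nat" where
  "idx_level (P r l) = l"
| "idx_level (A i) = 0"
| "idx_level (S j) = 0"

definition P_below :: "nat \<Rightarrow> hidx set" where
  "P_below n = {b \<in> P_idx. idx_level b < n}"

abbreviation J_below :: "nat \<Rightarrow> 'a::field helt set" where
  "J_below n \<equiv> coord_space (P_below n)"

abbreviation p_unit :: "nat \<Rightarrow> nat \<Rightarrow> 'a::field helt" where
  "p_unit r l \<equiv> Poly_Mapping.single (P r l) 1"

lemma P_in_P_idx [simp]: "P r l \<in> P_idx \<longleftrightarrow> (r = 1 \<or> r = 2) \<and> 3 dvd l \<and> 0 < l"
  by (auto simp: P_idx_def)

lemma P_in_P_below [simp]: "P r l \<in> P_below n \<longleftrightarrow> P r l \<in> P_idx \<and> l < n"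
  by (simp add: P_below_def)

lemma P_idx_cases:
  assumes "b \<in> P_idx"
  obtains r l where "b = P r l" "r = 1 \<or> r = 2" "3 dvd l" "0 < l"
  using assms by (auto simp: P_idx_def)

lemma P_below_cases:
  assumes "b \<in> P_below n"
  obtains r l where "b = P r l" "r = 1 \<or> r = 2" "3 dvd l" "0 < l" "l < n"
  using assms by (auto simp: P_below_def P_idx_def)

lemma hp_eq_p_unit: "r = 1 \<or> r = 2 \<Longrightarrow> 0 < l \<Longrightarrow> 3 dvd l \<Longrightarrow> hp (int r) l = p_unit r l"
  by (auto simp: hp_def)

lemma hp_in_coord_space_P_idx: "hp r l \<in> coord_space P_idx"
  by (rule hp_in_coord_space) simp

lemma hp_in_J_below: "l < n \<Longrightarrow> hp r l \<in> J_below n"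
  by (rule hp_in_coord_space) simp

lemma bprod_P_in_coord_space_P_idx: "bprod b (P r l) \<in> coord_space P_idx"
proof -
  have "hz t l' \<in> coord_space P_idx" for t l'
    by (rule hz_in_coord_space) simp
  then show ?thesis
    by (cases b) (auto intro!: coord_space_add coord_space_diff coord_space_hsc hp_in_coord_space_P_idx)
qed

lemma is_ideal_coord_space_P_idx: "is_ideal (coord_space P_idx :: 'a::field helt set)"
  unfolding is_ideal_def
proof (intro conjI ballI allI)
  show "coord_space P_idx \<subseteq> (Hhat :: 'a helt set)"
    by (auto simp: coord_space_def Hhat_def P_idx_def valid_idx_def)
  show "hmul h y \<in> coord_space P_idx" if "y \<in> coord_space P_idx" for h y :: "'a helt"
    using that by (rule hmul_in_coord_space) (auto elim: P_idx_cases simp: bprod_P_in_coord_space_P_idx)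
qed (simp_all add: coord_space_add coord_space_hsc)

lemma coord_space_P_idx_subset_ideal:
  assumes I: "is_ideal I" and gens: "\<forall>r\<in>{1,2}. \<forall>j. 3 dvd j \<and> j > 0 \<longrightarrow> hp (int r) j \<in> I"
  shows "coord_space P_idx \<subseteq> I"
proof
  fix f :: "'a helt" assume f: "f \<in> coord_space P_idx"
  have "Poly_Mapping.single b 1 \<in> I" if "b \<in> Poly_Mapping.keys f" for b
  proof -
    from key_in_coord_space[OF f that] obtain r l
      where b: "b = P r l" and rl: "r = 1 \<or> r = 2" "3 dvd l" "0 < l"
      by (rule P_idx_cases)
    have "hp (int r) l \<in> I"
      using gens rl by blast
    then show ?thesis
      by (simp add: b hp_eq_p_unit[OF rl(1) rl(3,2)])
  qed
  then have "(\<Sum>b\<in>Poly_Mapping.keys f. hsc (Poly_Mapping.lookup f b) (Poly_Mapping.single b 1)) \<in> I"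
    by (intro ideal_sum[OF I] ideal_hsc[OF I])
  then show "f \<in> I"
    by (simp only: sum_keys_hsc_single)
qed

lemma Jid_eq_coord_space: "Jid = coord_space P_idx"
proof
  show "Jid \<subseteq> coord_space P_idx"
    unfolding Jid_def by (rule Inter_lower) (simp add: is_ideal_coord_space_P_idx hp_in_coord_space_P_idx)
  show "coord_space P_idx \<subseteq> Jid"
    unfolding Jid_def by (rule Inter_greatest) (simp add: coord_space_P_idx_subset_ideal)
qed

lemma finite_plevel_set:
  "finite {k. Poly_Mapping.lookup x (P 1 k) \<noteq> 0 \<or> Poly_Mapping.lookup x (P 2 k) \<noteq> 0}"
proof (rule finite_subset)
  show "{k. Poly_Mapping.lookup x (P 1 k) \<noteq> 0 \<or> Poly_Mapping.lookup x (P 2 k) \<noteq> 0}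
      \<subseteq> idx_level ` Poly_Mapping.keys x"
  proof
    fix k assume "k \<in> {k. Poly_Mapping.lookup x (P 1 k) \<noteq> 0 \<or> Poly_Mapping.lookup x (P 2 k) \<noteq> 0}"
    then obtain r where "P r k \<in> Poly_Mapping.keys x"
      by (auto simp: in_keys_iff)
    then show "k \<in> idx_level ` Poly_Mapping.keys x"
      by (rule rev_image_eqI) simp
  qed
qed simp

lemma level_le_plevel:
  "Poly_Mapping.lookup x (P r l) \<noteq> 0 \<Longrightarrow> r = 1 \<or> r = 2 \<Longrightarrow> l \<le> plevel x"
  unfolding plevel_def using finite_plevel_set by (auto intro: Max_ge)

lemma plevel_attained:
  assumes "x \<in> coord_space P_idx" "x \<noteq> 0"
  shows "Poly_Mapping.lookup x (P 1 (plevel x)) \<noteq> 0 \<or> Poly_Mapping.lookup x (P 2 (plevel x)) \<noteq> 0"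
proof -
  obtain b where "b \<in> Poly_Mapping.keys x"
    using assms(2) by (metis ex_in_conv keys_eq_empty)
  moreover from key_in_coord_space[OF assms(1) this] obtain r l
    where "b = P r l" "r = 1 \<or> r = 2" by (rule P_idx_cases)
  ultimately have "{k. Poly_Mapping.lookup x (P 1 k) \<noteq> 0 \<or> Poly_Mapping.lookup x (P 2 k) \<noteq> 0} \<noteq> {}"
    by (auto simp: in_keys_iff)
  from Max_in[OF finite_plevel_set this] show ?thesis
    by (simp add: plevel_def)
qed

lemma plevel_pos:
  assumes "x \<in> coord_space P_idx" "x \<noteq> 0"
  shows "0 < plevel x"
proof -
  obtain r where "P r (plevel x) \<in> Poly_Mapping.keys x"
    using plevel_attained[OF assms] by (auto simp: in_keys_iff)
  from key_in_coord_space[OF assms(1) this] show ?thesis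
    by simp
qed

lemma plevel_less:
  assumes "x \<in> J_below n" "x \<noteq> 0"
  shows "plevel x < n"
proof -
  have "x \<in> coord_space P_idx"
    using assms(1) by (auto simp: coord_space_def P_below_def)
  then obtain r where "P r (plevel x) \<in> Poly_Mapping.keys x"
    using plevel_attained assms(2) by (auto simp: in_keys_iff)
  from key_in_coord_space[OF assms(1) this] show ?thesis
    by simp
qed

lemma minus_leading_terms_in_J_below:
  fixes x :: "'a::field helt"
  assumes x: "x \<in> coord_space P_idx" and n: "plevel x = n"
  shows "x - (hsc (Poly_Mapping.lookup x (P 1 n)) (p_unit 1 n)
            + hsc (Poly_Mapping.lookup x (P 2 n)) (p_unit 2 n)) \<in> J_below n"
    (is "x - ?L \<in> _")
  unfolding coord_space_def
proof (intro CollectI subsetI)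
  fix b assume "b \<in> Poly_Mapping.keys (x - ?L)"
  then have nz: "Poly_Mapping.lookup x b - Poly_Mapping.lookup ?L b \<noteq> 0"
    by (simp add: in_keys_iff lookup_minus)
  have "b \<noteq> P 1 n" "b \<noteq> P 2 n"
    using nz by (auto simp: lookup_add lookup_single)
  then have "Poly_Mapping.lookup ?L b = 0"
    by (simp add: lookup_add lookup_single)
  with nz have "b \<in> Poly_Mapping.keys x"
    by (simp add: in_keys_iff)
  have "b \<in> P_idx"
    using key_in_coord_space[OF x \<open>b \<in> Poly_Mapping.keys x\<close>] .
  then obtain r l where b: "b = P r l" and r: "r = 1 \<or> r = 2"
    by (rule P_idx_cases)
  have "l \<le> n"
    using level_le_plevel[of x r l] \<open>b \<in> Poly_Mapping.keys x\<close> b r n by (simp add: in_keys_iff)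
  moreover have "l \<noteq> n"
    using \<open>b \<noteq> P 1 n\<close> \<open>b \<noteq> P 2 n\<close> b r by auto
  ultimately show "b \<in> P_below n"
    using \<open>b \<in> P_idx\<close> b by simp
qed

lemma plevel_le_jdeg: "real (plevel x) \<le> jdeg x"
  by (simp add: jdeg_def)

lemma jdeg_less_plevel_Suc: "jdeg x < real (plevel x) + 1"
  by (simp add: jdeg_def)

section \<open>Elements of an ideal with prescribed leading term\<close>

lemma bprod_A_J_below: "c \<in> P_below n \<Longrightarrow> bprod (A i) c \<in> J_below n"
  by (erule P_below_cases) (auto intro!: coord_space_diff coord_space_hsc hp_in_J_below)

lemma bprod_S3_J_below: "c \<in> P_below n \<Longrightarrow> bprod (S 3) c \<in> J_below (n + 3)"
  by (erule P_below_cases) (auto intro!: coord_space_add coord_space_diff coord_space_hsc hp_in_J_below)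

definition a_twist :: "int \<Rightarrow> 'a::field helt \<Rightarrow> 'a helt" where
  "a_twist i y = hsc (3/2) y - hmul (ha i) y"

lemma a_twist_add: "a_twist i (y + z) = a_twist i y + a_twist i z"
  by (simp add: a_twist_def hmul_add_right hsc_add_right)

lemma a_twist_diff: "a_twist i (y - z) = a_twist i y - a_twist i z"
  by (simp add: a_twist_def hmul_diff_right hsc_diff_right)

lemma a_twist_hsc: "a_twist i (hsc c y) = hsc c (a_twist i y)"
  by (simp add: a_twist_def hmul_hsc_right hsc_diff_right hsc_hsc mult.commute)

lemma a_twist_J_below: "y \<in> J_below n \<Longrightarrow> a_twist i y \<in> J_below n"
  unfolding a_twist_def
  by (intro coord_space_diff coord_space_hsc hmul_in_coord_space) (auto simp: ha_def bprod_A_J_below)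

lemma a_twist_p_unit:
  "r = 1 \<or> r = 2 \<Longrightarrow> 0 < n \<Longrightarrow> 3 dvd n \<Longrightarrow> a_twist i (p_unit r n) = hp (- (i + int r)) n"
  by (simp add: a_twist_def ha_def hmul_single_single hp_eq_p_unit)

lemma hmul_s3_J_below: "y \<in> J_below n \<Longrightarrow> hmul (hs 3) y \<in> J_below (n + 3)"
  by (rule hmul_in_coord_space) (auto simp: hs_def bprod_S3_J_below)

lemma hmul_s3_p_unit:
  assumes "r = 1 \<or> r = 2" "0 < n" "3 dvd n"
  shows "hmul (hs 3) (p_unit r n) - hsc (- (3/8)) (p_unit r (n + 3)) \<in> J_below (n + 3)"
proof -
  have shifted: "hp (int r) (3 + n) = p_unit r (n + 3)"
    using assms by (simp add: hp_eq_p_unit add.commute)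
  have "hmul (hs 3) (p_unit r n) - hsc (- (3/8)) (p_unit r (n + 3))
      = hsc (3/4) (hp (int r) 3 + hp (int r) n) - hsc (3/8) (hp (int r) (nat \<bar>3 - int n\<bar>))"
    by (simp add: hs_def hmul_single_single shifted hsc_add_right hsc_uminus_left)
  also have "\<dots> \<in> J_below (n + 3)"
    using assms by (intro coord_space_add coord_space_diff coord_space_hsc hp_in_J_below) auto
  finally show ?thesis .
qed

lemma ha_in_Hhat: "ha i \<in> Hhat"
  by (simp add: ha_def Hhat_def valid_idx_def)

lemma hs_in_Hhat: "hs j \<in> Hhat"
  by (simp add: hs_def Hhat_def valid_idx_def)

context
  fixes I :: "'a::field helt set"
  assumes ideal: "is_ideal I"
begin

lemma ideal_a_twist: "y \<in> I \<Longrightarrow> a_twist i y \<in> I"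
  unfolding a_twist_def by (intro ideal_diff ideal_hsc ideal_hmul ha_in_Hhat ideal)

lemma leading_rescale:
  assumes "y \<in> I" "y - hsc g (p_unit r n) \<in> J_below n" "g \<noteq> 0"
  shows "\<exists>z\<in>I. z - p_unit r n \<in> J_below n"
proof
  show "hsc (1/g) y \<in> I"
    using assms(1) by (rule ideal_hsc[OF ideal])
  have "hsc (1/g) y - p_unit r n = hsc (1/g) (y - hsc g (p_unit r n))"
    using assms(3) by (simp add: hsc_diff_right hsc_hsc)
  then show "hsc (1/g) y - p_unit r n \<in> J_below n"
    using assms(2) by (simp add: coord_space_hsc)
qed

lemma leading_swap:
  assumes "z \<in> I" "z - p_unit r n \<in> J_below n" "r = 1 \<or> r = 2" "0 < n" "3 dvd n"
  shows "\<exists>w\<in>I. w - p_unit (3 - r) n \<in> J_below n"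
proof
  show "a_twist 0 z \<in> I"
    using assms(1) by (rule ideal_a_twist)
  have "a_twist 0 z - p_unit (3 - r) n = a_twist 0 (z - p_unit r n)"
    using assms(3-5) by (auto simp: a_twist_diff a_twist_p_unit hp_def)
  then show "a_twist 0 z - p_unit (3 - r) n \<in> J_below n"
    using assms(2) by (simp add: a_twist_J_below)
qed

lemma leading_unit_from_leading_pair:
  assumes char3: "(3::'a) \<noteq> 0"
    and y: "y \<in> I" "y - (hsc \<alpha> (p_unit 1 n) + hsc \<beta> (p_unit 2 n)) \<in> J_below n"
    and nz: "\<alpha> \<noteq> 0 \<or> \<beta> \<noteq> 0" and n: "0 < n" "3 dvd n" and r: "r = 1 \<or> r = 2"
  shows "\<exists>z\<in>I. z - p_unit r n \<in> J_below n"
proof -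
  define L where "L = hsc \<alpha> (p_unit 1 n) + hsc \<beta> (p_unit 2 n :: 'a helt)"
  have twisted: "y + a_twist i y \<in> I" "y + a_twist i y - (L + a_twist i L) \<in> J_below n" for i
  proof -
    show "y + a_twist i y \<in> I"
      using y(1) by (intro ideal_add[OF ideal] ideal_a_twist)
    have "y + a_twist i y - (L + a_twist i L) = (y - L) + a_twist i (y - L)"
      by (simp add: a_twist_diff)
    also have "\<dots> \<in> J_below n"
      using y(2) unfolding L_def by (intro coord_space_add a_twist_J_below)
    finally show "y + a_twist i y - (L + a_twist i L) \<in> J_below n" .
  qed
  have "L + a_twist 1 L = hsc (2 * \<alpha> - \<beta>) (p_unit 1 n)"
    using n by (intro poly_mapping_eqI)
      (simp add: L_def a_twist_add a_twist_hsc a_twist_p_unit hp_def lookup_add lookup_minus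
                 lookup_single when_def algebra_simps)
  moreover have "L + a_twist 2 L = hsc (2 * \<beta> - \<alpha>) (p_unit 2 n)"
    using n by (intro poly_mapping_eqI)
      (simp add: L_def a_twist_add a_twist_hsc a_twist_p_unit hp_def lookup_add lookup_minus
                 lookup_single when_def algebra_simps)
  moreover have "2 * \<alpha> - \<beta> \<noteq> 0 \<or> 2 * \<beta> - \<alpha> \<noteq> 0"
  proof (rule ccontr)
    assume "\<not> ?thesis"
    then have \<beta>: "\<beta> = 2 * \<alpha>" and \<alpha>: "\<alpha> = 2 * \<beta>"
      by simp_all
    have "3 * \<alpha> = 2 * (2 * \<alpha>) - \<alpha>"
      by (simp add: algebra_simps)
    also have "\<dots> = 2 * \<beta> - \<alpha>"
      by (simp only: \<beta>)
    also have "\<dots> = 0"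
      using \<alpha> by simp
    finally have "\<alpha> = 0"
      using char3 by simp
    with nz \<beta> show False
      by simp
  qed
  ultimately obtain r0 where r0: "r0 = 1 \<or> r0 = 2" and "\<exists>z\<in>I. z - p_unit r0 n \<in> J_below n"
    using leading_rescale twisted by metis
  then obtain z where z: "z \<in> I" "z - p_unit r0 n \<in> J_below n"
    by blast
  consider "r = r0" | "r = 3 - r0"
    using r r0 by linarith
  then show ?thesis
  proof cases
    case 1
    then show ?thesis using z by blast
  next
    case 2
    then show ?thesis using leading_swap[OF z r0 n] by simp
  qed
qed

lemma leading_unit_shift:
  assumes char2: "(2::'a) \<noteq> 0" and char3: "(3::'a) \<noteq> 0"
    and z: "z \<in> I" "z - p_unit r n \<in> J_below n" and r: "r = 1 \<or> r = 2" and n: "0 < n" "3 dvd n"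
  shows "\<exists>w\<in>I. w - p_unit r (n + 3) \<in> J_below (n + 3)"
proof (rule leading_rescale)
  show "hmul (hs 3) z \<in> I"
    using z(1) by (intro ideal_hmul[OF ideal] hs_in_Hhat)
  have "hmul (hs 3) z - hsc (- (3/8)) (p_unit r (n + 3))
      = hmul (hs 3) (z - p_unit r n) + (hmul (hs 3) (p_unit r n) - hsc (- (3/8)) (p_unit r (n + 3)))"
    by (simp add: hmul_diff_right)
  also have "\<dots> \<in> J_below (n + 3)"
    by (intro coord_space_add hmul_s3_J_below z(2) hmul_s3_p_unit r n)
  finally show "hmul (hs 3) z - hsc (- (3/8)) (p_unit r (n + 3)) \<in> J_below (n + 3)" .
  have "(8::'a) = 2 * 2 * 2"
    by simp
  then show "- (3/8) \<noteq> (0::'a)"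
    using char2 char3 by (metis divide_eq_0_iff mult_eq_0_iff neg_equal_0_iff_equal)
qed

lemma leading_unit_above:
  assumes char2: "(2::'a) \<noteq> 0" and char3: "(3::'a) \<noteq> 0" and r: "r = 1 \<or> r = 2"
    and k: "0 < k" and lead: "\<exists>z\<in>I. z - p_unit r (3 * k) \<in> J_below (3 * k)" and m: "k \<le> m"
  shows "\<exists>z\<in>I. z - p_unit r (3 * m) \<in> J_below (3 * m)"
  using m
proof (induction m rule: dec_induct)
  case base
  show ?case by (rule lead)
next
  case (step m)
  then obtain z where "z \<in> I" "z - p_unit r (3 * m) \<in> J_below (3 * m)"
    by blast
  from leading_unit_shift[OF char2 char3 this r] step.hyps k
  show ?case
    by (simp add: add.commute)
qed

lemma leading_units_triangular:
  assumes char2: "(2::'a) \<noteq> 0" and char3: "(3::'a) \<noteq> 0" and k: "0 < k"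
    and lead: "\<And>r. r = 1 \<or> r = 2 \<Longrightarrow> \<exists>z\<in>I. z - p_unit r (3 * k) \<in> J_below (3 * k)"
    and b: "b \<in> P_idx - P_below (3 * k)"
  shows "\<exists>z\<in>I. z - Poly_Mapping.single b 1 \<in> coord_space {c \<in> P_idx. idx_level c < idx_level b}"
proof -
  obtain r m where "b = P r (3 * m)" "r = 1 \<or> r = 2" "k \<le> m"
    using b by (auto simp: P_idx_def elim!: dvdE)
  then show ?thesis
    using leading_unit_above[OF char2 char3 _ k lead] by (auto simp: P_below_def)
qed

end

lemma bij_betw_P_below:
  "bij_betw (\<lambda>i. P (1 + i mod 2) (3 * (i div 2 + 1))) {..<2 * (k - 1)} (P_below (3 * k))"
proof (rule bij_betw_imageI)
  show "inj_on (\<lambda>i. P (1 + i mod 2) (3 * (i div 2 + 1))) {..<2 * (k - 1)}"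
    by (auto simp: inj_on_def) (metis div_mult_mod_eq)
  show "(\<lambda>i. P (1 + i mod 2) (3 * (i div 2 + 1))) ` {..<2 * (k - 1)} = P_below (3 * k)"
  proof
    show "(\<lambda>i. P (1 + i mod 2) (3 * (i div 2 + 1))) ` {..<2 * (k - 1)} \<subseteq> P_below (3 * k)"
      by auto
    show "P_below (3 * k) \<subseteq> (\<lambda>i. P (1 + i mod 2) (3 * (i div 2 + 1))) ` {..<2 * (k - 1)}"
    proof
      fix b assume "b \<in> P_below (3 * k)"
      then obtain r l where b: "b = P r l" and r: "r = 1 \<or> r = 2" and "3 dvd l" "0 < l" "l < 3 * k"
        by (rule P_below_cases)
      then obtain m where l: "l = 3 * (m + 1)" and "m + 1 < k"
        by (metis dvd_def Suc_eq_plus1 gr0_conv_Suc mult_less_cancel1 nat_0_less_mult_iff)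
      define i where "i = 2 * m + (r - 1)"
      have "i < 2 * (k - 1)" "1 + i mod 2 = r" "i div 2 = m"
        using r \<open>m + 1 < k\<close> by (auto simp: i_def)
      then show "b \<in> (\<lambda>i. P (1 + i mod 2) (3 * (i div 2 + 1))) ` {..<2 * (k - 1)}"
        using b l by force
    qed
  qed
qed

lemma min_jdeg_disjoint_J_below:
  assumes "\<forall>y\<in>I. y \<noteq> 0 \<longrightarrow> jdeg x \<le> jdeg y"
  shows "I \<inter> J_below (plevel x) \<subseteq> {0}"
proof
  fix y assume y: "y \<in> I \<inter> J_below (plevel x)"
  show "y \<in> {0}"
  proof (rule ccontr)
    assume "y \<notin> {0}"
    then have "plevel y < plevel x"
      using y plevel_less by blast
    then have "jdeg y < jdeg x"
      using jdeg_less_plevel_Suc[of y] plevel_le_jdeg[of x] by linarith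
    with assms y \<open>y \<notin> {0}\<close> show False
      by force
  qed
qed

theorem corollary7p3:
  fixes I :: "'a::field helt set" and x :: "'a helt" and k :: nat
  assumes char2: "(2::'a) \<noteq> 0" and char3: "(3::'a) \<noteq> 0"
    and ideal: "is_ideal I" and nonzero: "I \<noteq> {0}" and sub: "I \<subseteq> Jid"
    and xI: "x \<in> I" and xnz: "x \<noteq> 0"
    and xmin: "\<forall>y\<in>I. y \<noteq> 0 \<longrightarrow> jdeg x \<le> jdeg y"
    and level: "plevel x = 3 * k"
  shows "has_codim (2 * (k - 1)) I Jid"
proof -
  have xJ: "x \<in> coord_space P_idx"
    using xI sub Jid_eq_coord_space by blast
  have k: "0 < k"
    using plevel_pos[OF xJ xnz] level by simp
  have lead_3k: "\<exists>z\<in>I. z - p_unit r (3 * k) \<in> J_below (3 * k)" if r: "r = 1 \<or> r = 2" for r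
    using leading_unit_from_leading_pair[OF ideal char3 xI minus_leading_terms_in_J_below[OF xJ level]
        plevel_attained[OF xJ xnz, unfolded level] _ _ r] k by simp
  have "has_codim (2 * (k - 1)) I (coord_space P_idx)"
  proof (rule has_codim_triangular[OF ideal_imp_hsubspace[OF ideal] _ bij_betw_P_below _ _
                        leading_units_triangular[OF ideal char2 char3 k lead_3k]])
    show "I \<subseteq> coord_space P_idx"
      using sub by (simp add: Jid_eq_coord_space)
    show "P_below (3 * k) \<subseteq> P_idx"
      by (auto simp: P_below_def)
    show "I \<inter> J_below (3 * k) \<subseteq> {0}"
      using min_jdeg_disjoint_J_below[OF xmin] by (simp add: level)
  qed
  then show ?thesis
    by (simp only: Jid_eq_coord_space)
qed

end
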